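(* Fix $\beta\in(0,1]$, $\lambda>0$, $p\in(1/2,1)$, trip data $\underline{x}\le\overline{x}$, $b<0$, $u_0\in\mathbb{R}$, and tariff bounds $0<\underline{\gamma}<\overline{\gamma}$ such that $\underline{x}+b\gamma\le u_0\le \overline{x}+b\gamma$ for all $\gamma\in[\underline{\gamma},\overline{\gamma}]$. For $\alpha>0$ let $\Gamma^*(\alpha)=\arg\max_{\gamma\in[\underline{\gamma},\overline{\gamma}]} f(\gamma;\alpha)$, with $f$ the expected revenue defined in the context (all parameters other than $\alpha$ held fixed). Then for $0<\alpha_1<\alpha_2$ we have $\max\Gamma^*(\alpha_2)\le\max\Gamma^*(\alpha_1)$ and $\min\Gamma^*(\alpha_2)\le\min\Gamma^*(\alpha_1)$. In particular, whenever the optimal tariff $\gamma^*(\alpha)$ is unique, it is monotonically nonincreasing in $\alpha$.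
   Context: Setting: a passenger chooses between a shared mobility service (SMoDS) and a certain alternative with objective utility $u_0$. At tariff $\gamma$, the SMoDS has two possible objective utilities, the worst case $\underline{u}(\gamma)=\underline{x}+b\gamma$ occurring with probability $p$ and the best case $\overline{u}(\gamma)=\overline{x}+b\gamma$ occurring with probability $1-p$. Probability weighting function: $\pi(q)=e^{-(-\ln q)^{\alpha}}$ for $q\in(0,1]$, $\pi(0)=0$. The reference point is the best-case outcome, $R=\overline{u}(\gamma)$, and the value function is $V(u)=(u-R)^{\beta}$ if $u\ge R$ and $V(u)=-\lambda(R-u)^{\beta}$ if $u<R$. Subjective utilities: $A^s=V(u_0)=-\lambda(\overline{u}-u_0)^{\beta}$ for the alternative, and $U^s=\pi(p)V(\underline{u})+\pi(1-p)V(\overline{u})=-\lambda\,\pi(p)(\overline{u}-\underline{u})^{\beta}$ for the SMoDS. Acceptance probability $p_s(\gamma)=e^{U^s}/(e^{U^s}+e^{A^s})$, i.e. $p_s(\gamma)=\big(1+\exp\{\lambda(\pi(p)(\overline{x}-\underline{x})^{\beta}-(\overline{x}+b\gamma-u_0)^{\beta})\}\big)^{-1}$. Expected revenue $f(\gamma)=\gamma\,p_s(\gamma)$, maximized over $\gamma\in[\underline{\gamma},\overline{\gamma}]$. *)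

theory Defs
  imports "HOL-Analysis.Analysis"
begin

definition prelec :: "real \<Rightarrow> real \<Rightarrow> real" where
  "prelec \<alpha> q = (if q = 0 then 0 else exp (- ((- ln q) powr \<alpha>)))"

definition accept_prob ::
  "real \<Rightarrow> real \<Rightarrow> real \<Rightarrow> real \<Rightarrow> real \<Rightarrow> real \<Rightarrow> real \<Rightarrow> real \<Rightarrow> real \<Rightarrow> real" where
  "accept_prob \<alpha> \<beta> lam p xl xu b u0 \<gamma> =
     1 / (1 + exp (lam * (prelec \<alpha> p * (xu - xl) powr \<beta> - (xu + b * \<gamma> - u0) powr \<beta>)))"

definition exp_revenue ::
  "real \<Rightarrow> real \<Rightarrow> real \<Rightarrow> real \<Rightarrow> real \<Rightarrow> real \<Rightarrow> real \<Rightarrow> real \<Rightarrow> real \<Rightarrow> real" where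
  "exp_revenue \<alpha> \<beta> lam p xl xu b u0 \<gamma> = \<gamma> * accept_prob \<alpha> \<beta> lam p xl xu b u0 \<gamma>"

definition opt_tariffs ::
  "real \<Rightarrow> real \<Rightarrow> real \<Rightarrow> real \<Rightarrow> real \<Rightarrow> real \<Rightarrow> real \<Rightarrow> real \<Rightarrow> real \<Rightarrow> real \<Rightarrow> real set" where
  "opt_tariffs \<alpha> \<beta> lam p xl xu b u0 gl gu =
     {\<gamma> \<in> {gl..gu}. \<forall>\<gamma>' \<in> {gl..gu}.
        exp_revenue \<alpha> \<beta> lam p xl xu b u0 \<gamma>' \<le> exp_revenue \<alpha> \<beta> lam p xl xu b u0 \<gamma>}"

end

theory Submission
  imports Defs
begin

text \<open>
  Writing \<open>X \<alpha> = exp (lam * prelec \<alpha> p * (xu - xl) powr \<beta>)\<close> and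
  \<open>g \<gamma> = exp (- lam * (xu + b * \<gamma> - u0) powr \<beta>)\<close>, the revenue is
  \<open>\<gamma> / (1 + X \<alpha> * g \<gamma>)\<close>. For \<open>\<gamma>\<^sub>1 < \<gamma>\<^sub>2\<close> the sign of the revenue difference
  is the sign of \<open>\<gamma>\<^sub>2 - \<gamma>\<^sub>1 + X * (\<gamma>\<^sub>2 * g \<gamma>\<^sub>1 - \<gamma>\<^sub>1 * g \<gamma>\<^sub>2)\<close>, an affine function
  of \<open>X \<ge> 0\<close> that is positive at \<open>X = 0\<close>; so it changes sign at most once, from
  positive to negative. This single crossing property makes the set of maximizers
  move down (in the strong set order) as \<open>X\<close> grows, and \<open>X\<close> grows with \<open>\<alpha>\<close>
  because \<open>0 < - ln p < 1\<close> for \<open>1/2 < p < 1\<close>.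
\<close>

definition maximizers :: "('a \<Rightarrow> 'b::order) \<Rightarrow> 'a set \<Rightarrow> 'a set" where
  "maximizers f S = {x \<in> S. \<forall>y \<in> S. f y \<le> f x}"

lemma maximizers_subset: "maximizers f S \<subseteq> S"
  unfolding maximizers_def by auto

lemma bounded_maximizers: "bounded S \<Longrightarrow> bounded (maximizers f S)"
  by (rule bounded_subset[OF _ maximizers_subset])

lemma Sup_Inf_maximizers_mem:
  fixes f :: "real \<Rightarrow> real"
  assumes "compact S" "S \<noteq> {}" "continuous_on S f"
  shows "Sup (maximizers f S) \<in> maximizers f S \<and> Inf (maximizers f S) \<in> maximizers f S"
proof -
  obtain m where m: "m \<in> S" "\<forall>y \<in> S. f y \<le> f m"
    using continuous_attains_sup[OF assms] by blast
  have eq: "maximizers f S = {x \<in> S. f m \<le> f x}"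
    using m unfolding maximizers_def by (auto intro: order_trans)
  have "closed (maximizers f S)"
    unfolding eq using assms by (intro continuous_on_closed_Collect_le continuous_on_const compact_imp_closed)
  moreover have "maximizers f S \<noteq> {}"
    using m eq by auto
  moreover have "bounded (maximizers f S)"
    using assms(1) by (intro bounded_maximizers compact_imp_bounded)
  ultimately show ?thesis
    by (simp add: closed_contains_Sup closed_contains_Inf bounded_imp_bdd_above bounded_imp_bdd_below)
qed

lemma max_min_maximizers_single_crossing:
  fixes f h :: "'a::linorder \<Rightarrow> 'b::linorder"
  assumes up: "\<And>a c. a \<in> S \<Longrightarrow> c \<in> S \<Longrightarrow> a < c \<Longrightarrow> f a \<le> f c \<Longrightarrow> h a \<le> h c"
    and down: "\<And>a c. a \<in> S \<Longrightarrow> c \<in> S \<Longrightarrow> a < c \<Longrightarrow> h c \<le> h a \<Longrightarrow> f c \<le> f a"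
    and a: "a \<in> maximizers h S" and c: "c \<in> maximizers f S"
  shows "max a c \<in> maximizers h S \<and> min a c \<in> maximizers f S"
proof (cases "a < c")
  case True
  from a c have S: "a \<in> S" "c \<in> S" and ha: "\<forall>y \<in> S. h y \<le> h a" and fc: "\<forall>y \<in> S. f y \<le> f c"
    unfolding maximizers_def by simp_all
  have "h a \<le> h c"
    using up[OF S True] fc S by simp
  then have "c \<in> maximizers h S"
    using ha S by (simp add: maximizers_def) (meson order_trans)
  moreover have "f c \<le> f a"
    using down[OF S True] ha S by simp
  then have "a \<in> maximizers f S"
    using fc S by (simp add: maximizers_def) (meson order_trans)
  ultimately show ?thesis
    using True by (simp add: max_absorb2 min_absorb1)
next
  case False
  then show ?thesis
    using a c by (simp add: max_def min_def)
qed

lemma Sup_Inf_maximizers_single_crossing: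
  fixes f h :: "real \<Rightarrow> real"
  assumes S: "compact S" "S \<noteq> {}" and cont: "continuous_on S f" "continuous_on S h"
    and up: "\<And>a c. a \<in> S \<Longrightarrow> c \<in> S \<Longrightarrow> a < c \<Longrightarrow> f a \<le> f c \<Longrightarrow> h a \<le> h c"
    and down: "\<And>a c. a \<in> S \<Longrightarrow> c \<in> S \<Longrightarrow> a < c \<Longrightarrow> h c \<le> h a \<Longrightarrow> f c \<le> f a"
  shows "Sup (maximizers f S) \<le> Sup (maximizers h S) \<and> Inf (maximizers f S) \<le> Inf (maximizers h S)"
proof -
  let ?H = "maximizers h S" and ?F = "maximizers f S"
  have mem: "Sup ?H \<in> ?H" "Inf ?H \<in> ?H" "Sup ?F \<in> ?F" "Inf ?F \<in> ?F"
    using Sup_Inf_maximizers_mem[OF S cont(2)] Sup_Inf_maximizers_mem[OF S cont(1)] by simp_all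
  have bdd: "bounded ?H" "bounded ?F"
    using compact_imp_bounded[OF S(1)] by (fact bounded_maximizers)+
  have "max (Sup ?H) (Sup ?F) \<le> Sup ?H"
    using max_min_maximizers_single_crossing[OF up down mem(1,3)] bounded_imp_bdd_above[OF bdd(1)]
    by (intro cSup_upper) simp_all
  moreover have "Inf ?F \<le> min (Inf ?H) (Inf ?F)"
    using max_min_maximizers_single_crossing[OF up down mem(2,4)] bounded_imp_bdd_below[OF bdd(2)]
    by (intro cInf_lower) simp_all
  ultimately show ?thesis
    by simp
qed

lemma affine_single_crossing:
  fixes d c X Y :: real
  assumes "0 < d" "0 \<le> X" "X \<le> Y"
  shows "0 \<le> d + Y * c \<Longrightarrow> 0 \<le> d + X * c"
    and "d + X * c \<le> 0 \<Longrightarrow> d + Y * c \<le> 0"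
proof -
  show "0 \<le> d + X * c" if "0 \<le> d + Y * c"
  proof (cases "0 \<le> c")
    case False
    then have "Y * c \<le> X * c"
      using assms by (simp add: mult_right_mono_neg)
    then show ?thesis
      using that by linarith
  qed (use assms in simp)
  show "d + Y * c \<le> 0" if "d + X * c \<le> 0"
  proof -
    have "c < 0"
      using that assms by (smt (verit) mult_nonneg_nonneg)
    then have "Y * c \<le> X * c"
      using assms by (simp add: mult_right_mono_neg)
    then show ?thesis
      using that by linarith
  qed
qed

lemma ratio_single_crossing:
  fixes a1 a2 g1 g2 X Y :: real
  assumes "a1 < a2" "0 \<le> g1" "0 \<le> g2" "0 \<le> X" "X \<le> Y"
  shows "a1 / (1 + Y * g1) \<le> a2 / (1 + Y * g2) \<Longrightarrow> a1 / (1 + X * g1) \<le> a2 / (1 + X * g2)"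
    and "a2 / (1 + X * g2) \<le> a1 / (1 + X * g1) \<Longrightarrow> a2 / (1 + Y * g2) \<le> a1 / (1 + Y * g1)"
proof -
  define d where "d = a2 - a1"
  define c where "c = a2 * g1 - a1 * g2"
  have sign: "a1 / (1 + Z * g1) \<le> a2 / (1 + Z * g2) \<longleftrightarrow> 0 \<le> d + Z * c"
    "a2 / (1 + Z * g2) \<le> a1 / (1 + Z * g1) \<longleftrightarrow> d + Z * c \<le> 0" if "0 \<le> Z" for Z
  proof -
    have "0 < 1 + Z * g1" "0 < 1 + Z * g2"
      using that assms by (simp_all add: add_pos_nonneg)
    then show "a1 / (1 + Z * g1) \<le> a2 / (1 + Z * g2) \<longleftrightarrow> 0 \<le> d + Z * c"
      "a2 / (1 + Z * g2) \<le> a1 / (1 + Z * g1) \<longleftrightarrow> d + Z * c \<le> 0"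
      unfolding d_def c_def by (simp_all add: divide_simps algebra_simps)
  qed
  have "0 < d" "0 \<le> Y"
    using assms unfolding d_def by linarith+
  with assms sign affine_single_crossing[of d X Y c]
  show "a1 / (1 + Y * g1) \<le> a2 / (1 + Y * g2) \<Longrightarrow> a1 / (1 + X * g1) \<le> a2 / (1 + X * g2)"
    and "a2 / (1 + X * g2) \<le> a1 / (1 + X * g1) \<Longrightarrow> a2 / (1 + Y * g2) \<le> a1 / (1 + Y * g1)"
    by blast+
qed

lemma prelec_mono_exponent:
  fixes \<alpha>1 \<alpha>2 p :: real
  assumes "exp (-1) \<le> p" "p \<le> 1" "\<alpha>1 \<le> \<alpha>2"
  shows "prelec \<alpha>1 p \<le> prelec \<alpha>2 p"
proof -
  have "0 < p"
    using assms(1) exp_gt_zero[of "-1"] by linarith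
  then have "0 \<le> - ln p" "- ln p \<le> 1"
    using assms(1,2) ln_ge_iff[of p "-1"] by simp_all
  then have "(- ln p) powr \<alpha>2 \<le> (- ln p) powr \<alpha>1"
    using assms(3) by (rule powr_mono'[rotated])
  then show ?thesis
    unfolding prelec_def using \<open>0 < p\<close> by simp
qed

lemma exp_revenue_eq:
  "exp_revenue \<alpha> \<beta> lam p xl xu b u0 \<gamma> =
     \<gamma> / (1 + exp (lam * (prelec \<alpha> p * (xu - xl) powr \<beta>)) * exp (- (lam * (xu + b * \<gamma> - u0) powr \<beta>)))"
  unfolding exp_revenue_def accept_prob_def
  by (simp add: right_diff_distrib exp_diff exp_minus divide_inverse)

lemma exp_revenue_single_crossing:
  fixes \<alpha>1 \<alpha>2 \<beta> lam p xl xu b u0 a c :: real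
  assumes "exp (-1) \<le> p" "p \<le> 1" "0 \<le> lam" "\<alpha>1 \<le> \<alpha>2" "a < c"
  defines "f \<equiv> \<lambda>\<alpha>. exp_revenue \<alpha> \<beta> lam p xl xu b u0"
  shows "f \<alpha>2 a \<le> f \<alpha>2 c \<Longrightarrow> f \<alpha>1 a \<le> f \<alpha>1 c"
    and "f \<alpha>1 c \<le> f \<alpha>1 a \<Longrightarrow> f \<alpha>2 c \<le> f \<alpha>2 a"
proof -
  define X where "X \<alpha> = exp (lam * (prelec \<alpha> p * (xu - xl) powr \<beta>))" for \<alpha>
  define g where "g \<gamma> = exp (- (lam * (xu + b * \<gamma> - u0) powr \<beta>))" for \<gamma>
  have f: "f \<alpha> \<gamma> = \<gamma> / (1 + X \<alpha> * g \<gamma>)" for \<alpha> \<gamma>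
    unfolding f_def X_def g_def by (rule exp_revenue_eq)
  have "prelec \<alpha>1 p * (xu - xl) powr \<beta> \<le> prelec \<alpha>2 p * (xu - xl) powr \<beta>"
    using prelec_mono_exponent[OF assms(1,2,4)] by (simp add: mult_right_mono)
  then have "X \<alpha>1 \<le> X \<alpha>2"
    unfolding X_def using assms(3) by (simp add: mult_left_mono)
  moreover have "0 \<le> X \<alpha>1" "0 \<le> g a" "0 \<le> g c"
    unfolding X_def g_def by simp_all
  ultimately show "f \<alpha>2 a \<le> f \<alpha>2 c \<Longrightarrow> f \<alpha>1 a \<le> f \<alpha>1 c"
    and "f \<alpha>1 c \<le> f \<alpha>1 a \<Longrightarrow> f \<alpha>2 c \<le> f \<alpha>2 a"
    unfolding f using ratio_single_crossing[OF assms(5)] by blast+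
qed

lemma continuous_on_exp_revenue:
  assumes "0 < \<beta>" "\<forall>\<gamma> \<in> S. u0 \<le> xu + b * \<gamma>"
  shows "continuous_on S (exp_revenue \<alpha> \<beta> lam p xl xu b u0)"
proof -
  define D where "D \<gamma> = (xu + b * \<gamma> - u0) powr \<beta>" for \<gamma>
  have "continuous_on S D"
    unfolding D_def using assms by (intro continuous_on_powr' continuous_intros) auto
  moreover have "exp_revenue \<alpha> \<beta> lam p xl xu b u0 =
      (\<lambda>\<gamma>. \<gamma> * (1 / (1 + exp (lam * (prelec \<alpha> p * (xu - xl) powr \<beta> - D \<gamma>)))))"
    unfolding exp_revenue_def[abs_def] accept_prob_def D_def ..
  ultimately show ?thesis
    by (auto intro!: continuous_intros simp: add_nonneg_eq_0_iff)
qed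

theorem mainTheorem2:
  fixes \<alpha>1 \<alpha>2 \<beta> lam p xl xu b u0 gl gu :: real
  assumes "0 < \<beta>" "\<beta> \<le> 1" "0 < lam" "1/2 < p" "p < 1"
    and "xl \<le> xu" "b < 0" "0 < gl" "gl < gu"
    and "\<forall>\<gamma> \<in> {gl..gu}. xl + b * \<gamma> \<le> u0 \<and> u0 \<le> xu + b * \<gamma>"
    and "0 < \<alpha>1" "\<alpha>1 < \<alpha>2"
  defines "G \<equiv> (\<lambda>\<alpha>. opt_tariffs \<alpha> \<beta> lam p xl xu b u0 gl gu)"
  shows "Sup (G \<alpha>1) \<in> G \<alpha>1 \<and> Inf (G \<alpha>1) \<in> G \<alpha>1
       \<and> Sup (G \<alpha>2) \<in> G \<alpha>2 \<and> Inf (G \<alpha>2) \<in> G \<alpha>2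
       \<and> Sup (G \<alpha>2) \<le> Sup (G \<alpha>1) \<and> Inf (G \<alpha>2) \<le> Inf (G \<alpha>1)
       \<and> (\<forall>g1 g2. G \<alpha>1 = {g1} \<and> G \<alpha>2 = {g2} \<longrightarrow> g2 \<le> g1)"
proof -
  define f where "f \<alpha> = exp_revenue \<alpha> \<beta> lam p xl xu b u0" for \<alpha>
  have G: "G \<alpha> = maximizers (f \<alpha>) {gl..gu}" for \<alpha>
    unfolding G_def f_def opt_tariffs_def maximizers_def ..
  have S: "compact {gl..gu}" "{gl..gu} \<noteq> {}"
    using assms(9) by simp_all
  have cont: "continuous_on {gl..gu} (f \<alpha>)" for \<alpha>
    unfolding f_def using assms(1,10) by (intro continuous_on_exp_revenue) auto
  have "exp (-1) \<le> (1/2 :: real)"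
    using exp_ge_add_one_self[of 1] by (simp add: exp_minus field_simps)
  then have "exp (-1) \<le> p"
    using assms(4) by linarith
  then have order: "Sup (G \<alpha>2) \<le> Sup (G \<alpha>1) \<and> Inf (G \<alpha>2) \<le> Inf (G \<alpha>1)"
    unfolding G
  proof (intro Sup_Inf_maximizers_single_crossing S cont)
    fix a c :: real assume "a < c"
    have "p \<le> 1" "0 \<le> lam" "\<alpha>1 \<le> \<alpha>2"
      using assms(3,5,12) by simp_all
    note crossing = exp_revenue_single_crossing[OF \<open>exp (-1) \<le> p\<close> this \<open>a < c\<close>]
    show "f \<alpha>2 a \<le> f \<alpha>2 c \<Longrightarrow> f \<alpha>1 a \<le> f \<alpha>1 c"
      unfolding f_def by (rule crossing(1))
    show "f \<alpha>1 c \<le> f \<alpha>1 a \<Longrightarrow> f \<alpha>2 c \<le> f \<alpha>2 a"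
      unfolding f_def by (rule crossing(2))
  qed
  moreover have "g2 \<le> g1" if "G \<alpha>1 = {g1}" "G \<alpha>2 = {g2}" for g1 g2
    using order that by simp
  ultimately show ?thesis
    unfolding G using Sup_Inf_maximizers_mem[OF S cont] by blast
qed

end
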